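(* Let $K,M$ be symmetric homogeneous stable means and $N$ a symmetric homogeneous mean, all three having symmetric asymptotic expansions with coefficients $(a^K_n),(a^M_n),(a^N_n)$. If $N$ is simultaneously $(K,M)$-stabilizable and $(M,K)$-stabilizable, then $a^K_n=a^M_n$ for all $n\in\mathbb N_0$ and $a^N_1=a^M_1=a^K_1$; moreover $a^N_2=\frac16a^N_1(1+a^N_1)(1-4a^N_1)$.
   Context: A bi-variate mean is $M:(0,\infty)^2\to(0,\infty)$ with $\min\le M\le\max$; symmetric and homogeneous (degree 1). $M$ is stable if $M(s,t)=M\big(M(s,M(s,t)),M(M(s,t),t)\big)$. For stable means $K,M$, $N$ is $(K,M)$-stabilizable if $N(s,t)=K\big(N(s,M(s,t)),N(M(s,t),t)\big)$ for all $s,t>0$. A mean has a symmetric asymptotic expansion with coefficients $(a_n)$ if for every fixed real $t$ and $N\ge0$, $M(x-t,x+t)=\sum_{n=0}^Na_nt^{2n}x^{-2n+1}+o(x^{-2N+1})$ as $x\to\infty$. *)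

theory Defs
  imports "HOL-Analysis.Analysis" "HOL-Library.Landau_Symbols"
begin

text \<open>A bivariate mean on the positive reals. Values outside (0,inf)^2 are irrelevant.\<close>
definition is_mean :: "(real \<Rightarrow> real \<Rightarrow> real) \<Rightarrow> bool" where
  "is_mean M \<longleftrightarrow> (\<forall>s>0. \<forall>t>0. min s t \<le> M s t \<and> M s t \<le> max s t)"

definition symmetric_mean :: "(real \<Rightarrow> real \<Rightarrow> real) \<Rightarrow> bool" where
  "symmetric_mean M \<longleftrightarrow> (\<forall>s>0. \<forall>t>0. M s t = M t s)"

definition homogeneous_mean :: "(real \<Rightarrow> real \<Rightarrow> real) \<Rightarrow> bool" where
  "homogeneous_mean M \<longleftrightarrow> (\<forall>c>0. \<forall>s>0. \<forall>t>0. M (c * s) (c * t) = c * M s t)"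

definition stable_mean :: "(real \<Rightarrow> real \<Rightarrow> real) \<Rightarrow> bool" where
  "stable_mean M \<longleftrightarrow> (\<forall>s>0. \<forall>t>0. M s t = M (M s (M s t)) (M (M s t) t))"

definition stabilizable :: "(real \<Rightarrow> real \<Rightarrow> real) \<Rightarrow> (real \<Rightarrow> real \<Rightarrow> real) \<Rightarrow>
    (real \<Rightarrow> real \<Rightarrow> real) \<Rightarrow> bool" where
  "stabilizable K M N \<longleftrightarrow> (\<forall>s>0. \<forall>t>0. N s t = K (N s (M s t)) (N (M s t) t))"

definition sym_asymp_expansion :: "(real \<Rightarrow> real \<Rightarrow> real) \<Rightarrow> (nat \<Rightarrow> real) \<Rightarrow> bool" where
  "sym_asymp_expansion M a \<longleftrightarrow>
     (\<forall>t::real. \<forall>N::nat.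
        (\<lambda>x. M (x - t) (x + t) - (\<Sum>n\<le>N. a n * t ^ (2 * n) * x powr (1 - 2 * real n)))
          \<in> o[at_top](\<lambda>x. x powr (1 - 2 * real N)))"

end

theory Submission
  imports Defs
begin

text \<open>Homogeneity reduces a mean X to its profile phi_X(r) = X(1 - r, 1 + r), since
  X(p, q) = (p + q)/2 * phi_X((q - p)/(q + p)), and turns the expansion at infinity into an even
  expansion phi_X(r) = sum a_n r^(2n) + o(r^(2N)) as r -> 0+. Evaluated at (1 - r, 1 + r), a
  stabilization identity C(s, t) = A(C(s, B(s, t)), C(B(s, t), t)) expresses phi_C through the
  three profiles. The key estimate: changing phi_A, phi_B, phi_C by dA r^(2n), dB r^(2n), dC r^(2n)
  changes the right-hand side by (dA/4^n + dB/2 + dC/4^n) r^(2n) + o(r^(2n)): a change of the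
  middle mean moves both inner means by half as much, while the outer and the inner means are
  evaluated at pairs of relative spread about r/2. By induction on n, comparing the (K,M)- and (M,K)-stabilizations
  of N gives d (4^-n - 1/2) = 0 for d = aK_n - aM_n, and comparing the (K,M)-stabilization of N
  with the stability of M gives d (1 - 4^-n) = 0 for d = aN_n - aM_n. Finally, the stability of M
  is compared with that of its quartic Taylor polynomial, whose stabilization is computed
  explicitly; matching the coefficients of r^4 forces aM_2 = aM_1 (1 + aM_1) (1 - 4 aM_1) / 6.\<close>

section \<open>Profiles of homogeneous means\<close>

definition profile :: "(real \<Rightarrow> real \<Rightarrow> real) \<Rightarrow> real \<Rightarrow> real" where
  "profile X r = X (1 - r) (1 + r)"

definition mean_form :: "(real \<Rightarrow> real) \<Rightarrow> real \<Rightarrow> real \<Rightarrow> real" where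
  "mean_form \<phi> p q = (p + q) / 2 * \<phi> ((q - p) / (q + p))"

definition stab_form ::
    "(real \<Rightarrow> real \<Rightarrow> real) \<Rightarrow> (real \<Rightarrow> real \<Rightarrow> real) \<Rightarrow> (real \<Rightarrow> real \<Rightarrow> real) \<Rightarrow>
     real \<Rightarrow> real" where
  "stab_form A B C r = A (C (1 - r) (B (1 - r) (1 + r))) (C (B (1 - r) (1 + r)) (1 + r))"

lemma eventually_at_right_0_lt_1: "\<forall>\<^sub>F r in at_right (0::real). 0 < r \<and> r < 1"
  using eventually_at_right_real[of 0 1] by (auto elim: eventually_mono)

lemma mean_pos:
  assumes "is_mean X" "s > 0" "t > 0"
  shows "X s t > 0"
proof -
  have "min s t \<le> X s t" using assms unfolding is_mean_def by blast
  then show ?thesis using assms(2,3) by linarith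
qed

lemma homogeneous_mean_eq_mean_form:
  assumes "homogeneous_mean X" "p > 0" "q > 0"
  shows "X p q = mean_form (profile X) p q"
proof -
  have lo: "1 - (q - p) / (q + p) = 2 * p / (p + q)"
    and hi: "1 + (q - p) / (q + p) = 2 * q / (p + q)"
    using assms(2,3) by (simp_all add: field_simps)
  have pos: "(p + q) / 2 > 0" "2 * p / (p + q) > 0" "2 * q / (p + q) > 0"
    using assms(2,3) by simp_all
  have "X p q = X ((p + q) / 2 * (2 * p / (p + q))) ((p + q) / 2 * (2 * q / (p + q)))"
    using assms(2,3) by simp
  also have "\<dots> = (p + q) / 2 * X (2 * p / (p + q)) (2 * q / (p + q))"
    using assms(1) pos unfolding homogeneous_mean_def by blast
  finally show ?thesis unfolding mean_form_def profile_def lo hi .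
qed

lemma stab_form_eq_mean_forms:
  assumes "is_mean A" "homogeneous_mean A" "is_mean B" "homogeneous_mean B"
    and "is_mean C" "homogeneous_mean C" "0 < r" "r < 1"
  shows "stab_form A B C r =
    stab_form (mean_form (profile A)) (mean_form (profile B)) (mean_form (profile C)) r"
proof -
  define m where "m = B (1 - r) (1 + r)"
  define P where "P = C (1 - r) m"
  define Q where "Q = C m (1 + r)"
  have r: "1 - r > 0" "1 + r > 0" using assms(7,8) by auto
  have m: "m > 0" using mean_pos[OF assms(3) r] unfolding m_def .
  have PQ: "P > 0" "Q > 0" unfolding P_def Q_def using mean_pos[OF assms(5)] r m by auto
  have "stab_form A B C r = A P Q" unfolding stab_form_def P_def Q_def m_def ..
  also have "\<dots> = mean_form (profile A) P Q" by (rule homogeneous_mean_eq_mean_form[OF assms(2) PQ])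
  also have "P = mean_form (profile C) (1 - r) m"
    unfolding P_def using homogeneous_mean_eq_mean_form[OF assms(6) r(1) m] .
  also have "Q = mean_form (profile C) m (1 + r)"
    unfolding Q_def using homogeneous_mean_eq_mean_form[OF assms(6) m r(2)] .
  also have "m = mean_form (profile B) (1 - r) (1 + r)"
    unfolding m_def by (rule homogeneous_mean_eq_mean_form[OF assms(4) r])
  finally show ?thesis unfolding stab_form_def .
qed

lemma stable_mean_iff_stabilizable: "stable_mean M \<longleftrightarrow> stabilizable M M M"
  unfolding stable_mean_def stabilizable_def ..

lemma profile_eq_stab_form:
  assumes "is_mean A" "homogeneous_mean A" "is_mean B" "homogeneous_mean B"
    and "is_mean C" "homogeneous_mean C" "stabilizable A B C"
  shows "\<forall>\<^sub>F r in at_right 0. profile C r =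
    stab_form (mean_form (profile A)) (mean_form (profile B)) (mean_form (profile C)) r"
  using eventually_at_right_0_lt_1
proof eventually_elim
  case (elim r)
  then have "1 - r > 0" "1 + r > 0" by auto
  with assms(7) have "profile C r = stab_form A B C r"
    unfolding stabilizable_def profile_def stab_form_def by blast
  then show ?case using stab_form_eq_mean_forms[OF assms(1-6)] elim by simp
qed

lemma profile_bounds:
  assumes "is_mean X" "0 < r" "r < 1"
  shows "1 - r \<le> profile X r" "profile X r \<le> 1 + r"
proof -
  have "1 - r > 0" "1 + r > 0" using assms(2,3) by auto
  with assms(1) have
      "min (1 - r) (1 + r) \<le> X (1 - r) (1 + r) \<and> X (1 - r) (1 + r) \<le> max (1 - r) (1 + r)"
    unfolding is_mean_def by blast
  then show "1 - r \<le> profile X r" "profile X r \<le> 1 + r"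
    using assms(2) unfolding profile_def by (simp_all add: min_def max_def)
qed

lemma profile_tendsto_1:
  assumes "is_mean X"
  shows "(profile X \<longlongrightarrow> 1) (at_right 0)"
proof -
  have lo: "((\<lambda>r. 1 - r) \<longlongrightarrow> 1) (at_right (0::real))"
    using tendsto_diff[OF tendsto_const[of 1] tendsto_ident_at[of 0 "{0<..}"]] by simp
  have hi: "((\<lambda>r. 1 + r) \<longlongrightarrow> 1) (at_right (0::real))"
    using tendsto_add[OF tendsto_const[of 1] tendsto_ident_at[of 0 "{0<..}"]] by simp
  have "\<forall>\<^sub>F r in at_right 0. 1 - r \<le> profile X r \<and> profile X r \<le> 1 + r"
    using eventually_at_right_0_lt_1 by eventually_elim (simp add: profile_bounds[OF assms])
  then show ?thesis
    by (intro tendsto_sandwich[OF _ _ lo hi]) (simp_all add: eventually_conj_iff)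
qed

lemma inverse_powr_one_minus_even:
  fixes r :: real
  assumes "r > 0"
  shows "inverse r powr (1 - 2 * real n) = r ^ (2 * n) / r"
proof -
  have "inverse r powr (1 - 2 * real n) = r powr (2 * real n - 1)"
    using assms
    by (simp add: inverse_eq_divide powr_divide powr_minus_divide powr_diff divide_simps)
  also have "\<dots> = r powr (real (2 * n)) / r" using assms by (simp add: powr_diff)
  also have "\<dots> = r ^ (2 * n) / r" using assms by (subst powr_realpow[symmetric]) auto
  finally show ?thesis .
qed

text \<open>Substitute \<open>x = 1/r\<close>: by homogeneity \<open>X (1/r - 1) (1/r + 1) = profile X r / r\<close>.\<close>
lemma profile_asymp_expansion:
  assumes hom: "homogeneous_mean X" and ex: "sym_asymp_expansion X a"
  shows "(\<lambda>r. profile X r - (\<Sum>n\<le>k. a n * r ^ (2 * n))) \<in> o[at_right 0](\<lambda>r. r ^ (2 * k))"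
proof -
  let ?f = "\<lambda>x. X (x - 1) (x + 1) - (\<Sum>n\<le>k. a n * 1 ^ (2 * n) * x powr (1 - 2 * real n))"
  have "?f \<in> o[at_top](\<lambda>x. x powr (1 - 2 * real k))"
    using ex unfolding sym_asymp_expansion_def by blast
  from landau_o.small.compose[OF this filterlim_inverse_at_top_right]
  have "(\<lambda>r. r * ?f (inverse r)) \<in> o[at_right 0](\<lambda>r. r * inverse r powr (1 - 2 * real k))"
    by (rule landau_o.small.mult_left)
  moreover have "\<forall>\<^sub>F r in at_right 0. r * ?f (inverse r) = profile X r - (\<Sum>n\<le>k. a n * r ^ (2 * n))"
    using eventually_at_right_0_lt_1
  proof eventually_elim
    case (elim r)
    have "X (inverse r - 1) (inverse r + 1) = X (inverse r * (1 - r)) (inverse r * (1 + r))"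
      using elim by (simp add: field_simps)
    also have "\<dots> = inverse r * profile X r"
      unfolding profile_def using hom elim unfolding homogeneous_mean_def by auto
    finally have "X (inverse r - 1) (inverse r + 1) = inverse r * profile X r" .
    moreover have "r * (\<Sum>n\<le>k. a n * 1 ^ (2 * n) * inverse r powr (1 - 2 * real n))
        = (\<Sum>n\<le>k. a n * r ^ (2 * n))"
      unfolding sum_distrib_left
      by (rule sum.cong[OF refl]) (use elim in \<open>simp add: inverse_powr_one_minus_even\<close>)
    moreover have "r * ?f (inverse r) = r * X (inverse r - 1) (inverse r + 1)
        - r * (\<Sum>n\<le>k. a n * 1 ^ (2 * n) * inverse r powr (1 - 2 * real n))"
      by (simp only: right_diff_distrib)
    ultimately show ?case using elim by simp
  qed
  moreover have "\<forall>\<^sub>F r in at_right 0. r * inverse r powr (1 - 2 * real k) = r ^ (2 * k)"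
    using eventually_at_right_0_lt_1 by eventually_elim (simp add: inverse_powr_one_minus_even)
  ultimately show ?thesis
    by (rule landau_o.small.cong_ex[THEN iffD1, rotated 2])
qed

lemma mean_expansion_coeff_0:
  assumes "is_mean X" "homogeneous_mean X" "sym_asymp_expansion X a"
  shows "a 0 = 1"
proof -
  have "(\<lambda>r. profile X r - a 0) \<in> o[at_right 0](\<lambda>_. 1)"
    using profile_asymp_expansion[OF assms(2,3), of 0] by simp
  then have "((\<lambda>r. profile X r - a 0) \<longlongrightarrow> 0) (at_right 0)"
    using smalloD_tendsto[of _ _ "\<lambda>_. 1"] by simp
  then have "((\<lambda>r. profile X r - a 0 + a 0) \<longlongrightarrow> 0 + a 0) (at_right 0)"
    by (intro tendsto_intros)
  then have "(profile X \<longlongrightarrow> a 0) (at_right 0)" by simp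
  then show ?thesis
    using tendsto_unique[OF _ _ profile_tendsto_1[OF assms(1)]] by simp
qed

lemma power_even_smallo_id:
  assumes "n \<ge> 1"
  shows "(\<lambda>r::real. r ^ (2 * n)) \<in> o[at_right 0](\<lambda>r. r)"
proof (rule smalloI_tendsto)
  obtain k where k: "2 * n = Suc (Suc k)" using assms by (cases n) auto
  have "((\<lambda>r::real. r ^ Suc k) \<longlongrightarrow> 0) (at_right 0)"
    using tendsto_power[OF tendsto_ident_at[of 0 "{0<..}"], of "Suc k"] by simp
  moreover have "\<forall>\<^sub>F r in at_right 0. r ^ Suc k = (r::real) ^ (2 * n) / r"
    using eventually_at_right_0_lt_1 by eventually_elim (simp add: k)
  ultimately show "((\<lambda>r::real. r ^ (2 * n) / r) \<longlongrightarrow> 0) (at_right 0)"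
    by (rule Lim_transform_eventually)
  show "\<forall>\<^sub>F r in at_right 0. (r::real) \<noteq> 0"
    using eventually_at_right_0_lt_1 by (auto elim: eventually_mono)
qed

lemma smallo_id_tendsto_0:
  "f \<in> o[at_right 0](\<lambda>r. r) \<Longrightarrow> (f \<longlongrightarrow> 0) (at_right (0::real))"
  using landau_o.small_big_trans[of f _ "\<lambda>r. r" "\<lambda>_. 1"]
    bigoI_tendsto[of "\<lambda>r. r" "\<lambda>_. 1" 0 "at_right (0::real)"] smalloD_tendsto[of f _ "\<lambda>_. 1"]
  by (simp add: tendsto_ident_at)

lemma bigo_1_of_tendsto: "(h \<longlongrightarrow> c) F \<Longrightarrow> h \<in> O[F](\<lambda>_. 1::real)"
  for h :: "'a \<Rightarrow> real"
  by (rule bigoI_tendsto[where c = c]) auto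

lemma tendsto_0_mult_bigo_smallo:
  fixes h f g :: "'a \<Rightarrow> real"
  assumes "(h \<longlongrightarrow> 0) F" "f \<in> O[F](g)"
  shows "(\<lambda>x. h x * f x) \<in> o[F](g)"
proof -
  have "h \<in> o[F](\<lambda>_. 1)" by (rule smalloI_tendsto) (use assms(1) in auto)
  from landau_o.small_big_mult[OF this assms(2)] show ?thesis by simp
qed

lemma bigo_of_smallo_diff_monomial:
  fixes f :: "'a \<Rightarrow> real"
  assumes "(\<lambda>x. f x - c * g x) \<in> o[F](g)"
  shows "f \<in> O[F](g)"
proof -
  have "(\<lambda>x. f x - c * g x) \<in> O[F](g)" using landau_o.small_imp_big[OF assms] .
  moreover have "(\<lambda>x. c * g x) \<in> O[F](g)" by simp
  ultimately have "(\<lambda>x. (f x - c * g x) + c * g x) \<in> O[F](g)" by (rule sum_in_bigo)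
  then show ?thesis by simp
qed

lemma bigo_diff_commute: "(\<lambda>x. f x - g x) \<in> O[F](h) \<Longrightarrow> (\<lambda>x. g x - f x) \<in> O[F](h)"
  for f g h :: "'a \<Rightarrow> real"
  using landau_o.big.uminus_in_iff[of "\<lambda>x. f x - g x"] by simp

lemma coeff_eq_0_of_smallo:
  fixes g :: "'a \<Rightarrow> real"
  assumes "(\<lambda>x. c * g x) \<in> o[F](g)" "\<exists>\<^sub>F x in F. g x \<noteq> 0"
  shows "c = 0"
proof (rule ccontr)
  assume "c \<noteq> 0"
  with assms(1) have "g \<in> o[F](g)" by simp
  then have "\<forall>\<^sub>F x in F. g x = 0" by (simp add: landau_o.small_refl_iff)
  with assms(2) show False by (simp add: frequently_def)
qed

lemma frequently_power_ne_0: "\<exists>\<^sub>F r in at_right 0. (r::real) ^ k \<noteq> 0"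
proof -
  have "\<forall>\<^sub>F r in at_right 0. (r::real) ^ k \<noteq> 0"
    using eventually_at_right_0_lt_1 by eventually_elim simp
  then show ?thesis using trivial_limit_at_right_real by (auto intro: eventually_frequently)
qed

lemma coeff_eq_0_of_eventually_eq:
  fixes f g :: "real \<Rightarrow> real"
  assumes "\<forall>\<^sub>F r in at_right 0. f r = g r"
    and "(\<lambda>r. f r - g r - c * r ^ k) \<in> o[at_right 0](\<lambda>r. r ^ k)"
  shows "c = 0"
proof (rule coeff_eq_0_of_smallo[OF _ frequently_power_ne_0])
  have "(\<lambda>r. - (f r - g r - c * r ^ k)) \<in> o[at_right 0](\<lambda>r. r ^ k)"
    using landau_o.small.uminus_in_iff[THEN iffD2, OF assms(2)] .
  moreover have "\<forall>\<^sub>F r in at_right 0. - (f r - g r - c * r ^ k) = c * r ^ k"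
    using assms(1) by eventually_elim simp
  ultimately show "(\<lambda>r. c * r ^ k) \<in> o[at_right 0](\<lambda>r. r ^ k)"
    by (rule landau_o.small.in_cong[THEN iffD1, rotated])
qed

text \<open>The constant coefficient is normalised: profiles of means tend to \<open>1\<close>.\<close>

definition profile_expansion :: "(real \<Rightarrow> real) \<Rightarrow> (nat \<Rightarrow> real) \<Rightarrow> nat \<Rightarrow> bool" where
  "profile_expansion \<phi> \<alpha> n \<longleftrightarrow>
     \<alpha> 0 = 1 \<and> (\<lambda>v. \<phi> v - (\<Sum>l\<le>n. \<alpha> l * v ^ (2 * l))) \<in> o[at_right 0](\<lambda>v. v ^ (2 * n))"

lemma profile_expansion_of_mean:
  assumes "is_mean X" "homogeneous_mean X" "sym_asymp_expansion X a"
  shows "profile_expansion (profile X) a n"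
  unfolding profile_expansion_def
  using mean_expansion_coeff_0[OF assms] profile_asymp_expansion[OF assms(2,3)] by blast

lemma profile_expansion_smallo_id:
  assumes "profile_expansion \<phi> \<alpha> n" "n \<ge> 1"
  shows "(\<lambda>v. \<phi> v - 1) \<in> o[at_right 0](\<lambda>v. v)"
proof -
  have "(\<lambda>v. \<phi> v - (\<Sum>l\<le>n. \<alpha> l * v ^ (2 * l))) \<in> o[at_right 0](\<lambda>v. v)"
    using assms landau_o.small_trans[OF _ power_even_smallo_id]
    unfolding profile_expansion_def by blast
  moreover have "(\<lambda>v. \<Sum>l\<in>{1..n}. \<alpha> l * v ^ (2 * l)) \<in> o[at_right 0](\<lambda>v. v)"
    by (intro big_sum_in_smallo) (simp add: power_even_smallo_id)
  ultimately have "(\<lambda>v. (\<phi> v - (\<Sum>l\<le>n. \<alpha> l * v ^ (2 * l))) + (\<Sum>l\<in>{1..n}. \<alpha> l * v ^ (2 * l)))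
      \<in> o[at_right 0](\<lambda>v. v)"
    by (rule sum_in_smallo)
  moreover have "(\<Sum>l\<le>n. \<alpha> l * v ^ (2 * l)) = 1 + (\<Sum>l\<in>{1..n}. \<alpha> l * v ^ (2 * l))" for v
    using assms(1) by (simp add: profile_expansion_def atMost_atLeast0 sum.atLeast_Suc_atMost)
  ultimately show ?thesis by simp
qed

lemma profile_expansion_tendsto_1:
  assumes "profile_expansion \<phi> \<alpha> n" "n \<ge> 1"
  shows "(\<phi> \<longlongrightarrow> 1) (at_right 0)"
proof -
  have "((\<lambda>v. (\<phi> v - 1) + 1) \<longlongrightarrow> 0 + 1) (at_right 0)"
    by (intro tendsto_intros smallo_id_tendsto_0 profile_expansion_smallo_id[OF assms])
  then show ?thesis by simp
qed

lemma profile_expansion_diff: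
  assumes "profile_expansion \<phi> \<alpha> n" "profile_expansion \<psi> \<beta> n" "\<And>j. j < n \<Longrightarrow> \<alpha> j = \<beta> j"
  shows "(\<lambda>v. \<phi> v - \<psi> v - (\<alpha> n - \<beta> n) * v ^ (2 * n)) \<in> o[at_right 0](\<lambda>v. v ^ (2 * n))"
proof -
  have rem: "(\<lambda>v. (\<phi> v - (\<Sum>l\<le>n. \<alpha> l * v ^ (2 * l))) - (\<psi> v - (\<Sum>l\<le>n. \<beta> l * v ^ (2 * l))))
      \<in> o[at_right 0](\<lambda>v. v ^ (2 * n))"
    by (rule sum_in_smallo(2)) (use assms(1,2) in \<open>simp_all add: profile_expansion_def\<close>)
  have sums: "(\<Sum>l\<le>n. \<alpha> l * v ^ (2 * l)) - (\<Sum>l\<le>n. \<beta> l * v ^ (2 * l))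
      = (\<alpha> n - \<beta> n) * v ^ (2 * n)" for v :: real
    using assms(3) by (simp add: lessThan_Suc_atMost[symmetric] algebra_simps)
  have "(\<phi> v - (\<Sum>l\<le>n. \<alpha> l * v ^ (2 * l))) - (\<psi> v - (\<Sum>l\<le>n. \<beta> l * v ^ (2 * l)))
      = \<phi> v - \<psi> v - (\<alpha> n - \<beta> n) * v ^ (2 * n)" for v :: real
    unfolding sums[of v, symmetric] by (simp add: algebra_simps)
  with rem show ?thesis by simp
qed

text \<open>\<open>x^k - y^k = (x - y) * (\<Sum>p<k. x^p * y^(k-1-p))\<close>, and the sum tends to \<open>0\<close> when \<open>k \<ge> 2\<close>.\<close>
lemma power_diff_smallo:
  fixes w w' :: "'a \<Rightarrow> real"
  assumes "k \<ge> 2" "(w \<longlongrightarrow> 0) F" "(w' \<longlongrightarrow> 0) F" "(\<lambda>x. w x - w' x) \<in> O[F](g)"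
  shows "(\<lambda>x. w x ^ k - w' x ^ k) \<in> o[F](g)"
proof -
  define S where "S x = (\<Sum>p<Suc (k - 1). w x ^ p * w' x ^ (k - 1 - p))" for x
  have k: "Suc (k - 1) = k" using assms(1) by simp
  have factor: "w x ^ k - w' x ^ k = S x * (w x - w' x)" for x
    using diff_power_eq_sum[of "w x" "k - 1" "w' x"] unfolding S_def k by (simp add: mult.commute)
  have "(S \<longlongrightarrow> (\<Sum>p<Suc (k - 1). 0 ^ p * 0 ^ (k - 1 - p))) F"
    unfolding S_def by (intro tendsto_intros assms(2,3))
  moreover have "(\<Sum>p<Suc (k - 1). (0::real) ^ p * 0 ^ (k - 1 - p)) = 0"
  proof (intro sum.neutral ballI)
    fix p assume "p \<in> {..<Suc (k - 1)}"
    then have "p \<noteq> 0 \<or> k - 1 - p \<noteq> 0" using assms(1) by auto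
    then show "(0::real) ^ p * 0 ^ (k - 1 - p) = 0" by auto
  qed
  ultimately have "(S \<longlongrightarrow> 0) F" by simp
  from tendsto_0_mult_bigo_smallo[OF this assms(4)] show ?thesis unfolding factor .
qed

lemma profile_expansion_compose_diff:
  fixes \<phi> w w' :: "real \<Rightarrow> real"
  assumes ex: "profile_expansion \<phi> \<alpha> n"
    and fw: "filterlim w (at_right 0) (at_right 0)"
    and fw': "filterlim w' (at_right 0) (at_right 0)"
    and Ow: "w \<in> O[at_right 0](\<lambda>r. r)" and Ow': "w' \<in> O[at_right 0](\<lambda>r. r)"
    and dw: "(\<lambda>r. w r - w' r) \<in> O[at_right 0](\<lambda>r. r ^ (2 * n))"
  shows "(\<lambda>r. \<phi> (w r) - \<phi> (w' r)) \<in> o[at_right 0](\<lambda>r. r ^ (2 * n))"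
proof -
  have rem: "(\<lambda>v. \<phi> v - (\<Sum>l\<le>n. \<alpha> l * v ^ (2 * l))) \<in> o[at_right 0](\<lambda>v. v ^ (2 * n))"
    using ex unfolding profile_expansion_def by blast
  have e1: "(\<lambda>r. \<phi> (w r) - (\<Sum>l\<le>n. \<alpha> l * w r ^ (2 * l))) \<in> o[at_right 0](\<lambda>r. r ^ (2 * n))"
    using landau_o.small_big_trans[OF landau_o.small.compose[OF rem fw]
        landau_o.big_power[OF Ow]] .
  have e2: "(\<lambda>r. \<phi> (w' r) - (\<Sum>l\<le>n. \<alpha> l * w' r ^ (2 * l))) \<in> o[at_right 0](\<lambda>r. r ^ (2 * n))"
    using landau_o.small_big_trans[OF landau_o.small.compose[OF rem fw']
        landau_o.big_power[OF Ow']] .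
  have tw: "(w \<longlongrightarrow> 0) (at_right 0)" "(w' \<longlongrightarrow> 0) (at_right 0)"
    using fw fw' by (simp_all add: filterlim_at)
  have e3: "(\<lambda>r. \<Sum>l\<le>n. \<alpha> l * (w r ^ (2 * l) - w' r ^ (2 * l))) \<in> o[at_right 0](\<lambda>r. r ^ (2 * n))"
  proof (rule big_sum_in_smallo)
    fix l
    show "(\<lambda>r. \<alpha> l * (w r ^ (2 * l) - w' r ^ (2 * l))) \<in> o[at_right 0](\<lambda>r. r ^ (2 * n))"
      by (cases "l = 0") (simp_all add: power_diff_smallo[OF _ tw dw])
  qed
  have "(\<lambda>r. (\<phi> (w r) - (\<Sum>l\<le>n. \<alpha> l * w r ^ (2 * l))) - (\<phi> (w' r) - (\<Sum>l\<le>n. \<alpha> l * w' r ^ (2 * l)))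
      + (\<Sum>l\<le>n. \<alpha> l * (w r ^ (2 * l) - w' r ^ (2 * l)))) \<in> o[at_right 0](\<lambda>r. r ^ (2 * n))"
    by (intro sum_in_smallo e1 e2 e3)
  then show ?thesis by (simp add: right_diff_distrib sum_subtractf)
qed

section \<open>Regular pairs\<close>

text \<open>Both components tend to \<open>1\<close> and \<open>Q - P\<close> is asymptotic to \<open>r\<close>, so the relative spread
  \<open>(Q - P) / (Q + P)\<close> is asymptotic to \<open>r/2\<close>; this is where the factor \<open>4^-n\<close> in the
  perturbation estimates comes from.\<close>

definition regular_pair :: "(real \<Rightarrow> real) \<Rightarrow> (real \<Rightarrow> real) \<Rightarrow> bool" where
  "regular_pair P Q \<longleftrightarrow>
     ((\<lambda>r. (P r + Q r) / 2) \<longlongrightarrow> 1) (at_right 0) \<and> ((\<lambda>r. (Q r - P r) / r) \<longlongrightarrow> 1) (at_right 0)"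

lemma regular_pair_sum_diff:
  assumes "regular_pair P Q"
  shows "((\<lambda>r. Q r + P r) \<longlongrightarrow> 2) (at_right 0)" "((\<lambda>r. Q r - P r) \<longlongrightarrow> 0) (at_right 0)"
proof -
  have "((\<lambda>r. (P r + Q r) / 2 * 2) \<longlongrightarrow> 1 * 2) (at_right 0)"
    using assms unfolding regular_pair_def by (intro tendsto_intros) auto
  moreover have "(\<lambda>r. (P r + Q r) / 2 * 2) = (\<lambda>r. Q r + P r)" by (auto simp: fun_eq_iff)
  ultimately show "((\<lambda>r. Q r + P r) \<longlongrightarrow> 2) (at_right 0)" by simp
  have "((\<lambda>r. r * ((Q r - P r) / r)) \<longlongrightarrow> 0 * 1) (at_right 0)"
    using assms unfolding regular_pair_def by (intro tendsto_intros tendsto_ident_at) auto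
  moreover have "\<forall>\<^sub>F r in at_right 0. r * ((Q r - P r) / r) = Q r - P r"
    using eventually_at_right_0_lt_1 by eventually_elim simp
  ultimately show "((\<lambda>r. Q r - P r) \<longlongrightarrow> 0) (at_right 0)"
    by (simp add: Lim_transform_eventually)
qed

lemma regular_pair_tendsto_1:
  assumes "regular_pair P Q"
  shows "(P \<longlongrightarrow> 1) (at_right 0)" "(Q \<longlongrightarrow> 1) (at_right 0)"
proof -
  note sd = regular_pair_sum_diff[OF assms]
  have "((\<lambda>r. ((Q r + P r) - (Q r - P r)) / 2) \<longlongrightarrow> (2 - 0) / 2) (at_right 0)"
    by (intro tendsto_intros sd) auto
  then show "(P \<longlongrightarrow> 1) (at_right 0)" by simp
  have "((\<lambda>r. ((Q r + P r) + (Q r - P r)) / 2) \<longlongrightarrow> (2 + 0) / 2) (at_right 0)"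
    by (intro tendsto_intros sd) auto
  then show "(Q \<longlongrightarrow> 1) (at_right 0)" by simp
qed

lemma regular_pair_eventually_pos:
  assumes "regular_pair P Q"
  shows "\<forall>\<^sub>F r in at_right 0. P r > 0 \<and> Q r > 0"
  using order_tendstoD(1)[OF regular_pair_tendsto_1(1)[OF assms], of 0]
    order_tendstoD(1)[OF regular_pair_tendsto_1(2)[OF assms], of 0]
  by (auto elim: eventually_elim2)

lemma regular_pair_spread:
  assumes "regular_pair P Q"
  shows "((\<lambda>r. (Q r - P r) / (Q r + P r) / r) \<longlongrightarrow> 1/2) (at_right 0)"
proof -
  have "((\<lambda>r. (Q r - P r) / r / (Q r + P r)) \<longlongrightarrow> 1 / 2) (at_right 0)"
    using assms regular_pair_sum_diff(1)[OF assms] unfolding regular_pair_def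
    by (intro tendsto_intros) auto
  then show ?thesis by (simp add: field_simps)
qed

lemma regular_pair_spread_bigo:
  assumes "regular_pair P Q"
  shows "(\<lambda>r. (Q r - P r) / (Q r + P r)) \<in> O[at_right 0](\<lambda>r. r)"
  by (rule bigoI_tendsto[OF regular_pair_spread[OF assms]])
    (use eventually_at_right_0_lt_1 in \<open>auto elim: eventually_mono\<close>)

lemma regular_pair_spread_filterlim:
  assumes "regular_pair P Q"
  shows "filterlim (\<lambda>r. (Q r - P r) / (Q r + P r)) (at_right 0) (at_right 0)"
proof (rule tendsto_imp_filterlim_at_right)
  show "((\<lambda>r. (Q r - P r) / (Q r + P r)) \<longlongrightarrow> 0) (at_right 0)"
    using tendsto_divide[OF regular_pair_sum_diff(2,1)[OF assms]] by simp
  have "\<forall>\<^sub>F r in at_right 0. (Q r - P r) / (Q r + P r) / r > 0"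
    using order_tendstoD(1)[OF regular_pair_spread[OF assms], of 0] by simp
  then show "\<forall>\<^sub>F r in at_right 0. (Q r - P r) / (Q r + P r) > 0"
    using eventually_at_right_0_lt_1
  proof eventually_elim
    case (elim r)
    then have "0 < (Q r - P r) / (Q r + P r) / r * r" by (intro mult_pos_pos) auto
    moreover have "(Q r - P r) / (Q r + P r) / r * r = (Q r - P r) / (Q r + P r)" using elim by simp
    ultimately show ?case by simp
  qed
qed

lemma regular_pair_perturb:
  assumes "regular_pair P Q"
    and "(\<lambda>r. P' r - P r) \<in> o[at_right 0](\<lambda>r. r)" "(\<lambda>r. Q' r - Q r) \<in> o[at_right 0](\<lambda>r. r)"
  shows "regular_pair P' Q'"
  unfolding regular_pair_def
proof
  have "((\<lambda>r. (P r + Q r) / 2 + ((P' r - P r) + (Q' r - Q r)) / 2) \<longlongrightarrow> 1 + (0 + 0) / 2) (at_right 0)"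
    using assms unfolding regular_pair_def by (intro tendsto_intros smallo_id_tendsto_0) auto
  moreover have
    "(\<lambda>r. (P r + Q r) / 2 + ((P' r - P r) + (Q' r - Q r)) / 2) = (\<lambda>r. (P' r + Q' r) / 2)"
    by (auto simp: fun_eq_iff field_simps)
  ultimately show "((\<lambda>r. (P' r + Q' r) / 2) \<longlongrightarrow> 1) (at_right 0)" by simp
  have "((\<lambda>r. (Q r - P r) / r + ((Q' r - Q r) / r - (P' r - P r) / r)) \<longlongrightarrow> 1 + (0 - 0)) (at_right 0)"
    using assms smalloD_tendsto[of _ "at_right 0" "\<lambda>r. r"] unfolding regular_pair_def
    by (intro tendsto_intros) auto
  then show "((\<lambda>r. (Q' r - P' r) / r) \<longlongrightarrow> 1) (at_right 0)"
    by (simp add: field_simps diff_divide_distrib)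
qed

lemma regular_pair_inner:
  assumes "(\<lambda>r. m r - 1) \<in> o[at_right 0](\<lambda>r. r)"
  shows "regular_pair (\<lambda>r. 1 - r) m" "regular_pair m (\<lambda>r. 1 + r)"
proof -
  have q: "((\<lambda>r. (m r - 1) / r) \<longlongrightarrow> 0) (at_right 0)" using smalloD_tendsto[OF assms] by simp
  have m: "(m \<longlongrightarrow> 1) (at_right 0)"
    using tendsto_add[OF smallo_id_tendsto_0[OF assms] tendsto_const[of 1]] by simp
  have r: "((\<lambda>r. r) \<longlongrightarrow> 0) (at_right (0::real))" by (rule tendsto_ident_at)
  have "((\<lambda>r. 1 + (m r - 1) / r) \<longlongrightarrow> 1 + 0) (at_right 0)"
       "((\<lambda>r. 1 - (m r - 1) / r) \<longlongrightarrow> 1 - 0) (at_right 0)"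
    by (intro tendsto_intros q)+
  moreover have "\<forall>\<^sub>F r in at_right 0. 1 + (m r - 1) / r = (m r - (1 - r)) / r \<and>
      1 - (m r - 1) / r = ((1 + r) - m r) / r"
    using eventually_at_right_0_lt_1 by eventually_elim (simp add: field_simps)
  moreover have "((\<lambda>r. ((1 - r) + m r) / 2) \<longlongrightarrow> ((1 - 0) + 1) / 2) (at_right 0)"
    by (intro tendsto_intros m r) auto
  moreover have "((\<lambda>r. (m r + (1 + r)) / 2) \<longlongrightarrow> (1 + (1 + 0)) / 2) (at_right 0)"
    by (intro tendsto_intros m r) auto
  ultimately show "regular_pair (\<lambda>r. 1 - r) m" "regular_pair m (\<lambda>r. 1 + r)"
    unfolding regular_pair_def by (auto elim: Lim_transform_eventually simp: eventually_conj_iff)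
qed

lemma regular_pair_midpoints:
  assumes "(m \<longlongrightarrow> 1) (at_right 0)"
  shows "regular_pair (\<lambda>r. ((1 - r) + m r) / 2) (\<lambda>r. (m r + (1 + r)) / 2)"
  unfolding regular_pair_def
proof
  have "((\<lambda>r. (m r + 1) / 2) \<longlongrightarrow> (1 + 1) / 2) (at_right 0)"
    by (intro tendsto_intros assms) auto
  moreover have "(\<lambda>r. (((1 - r) + m r) / 2 + (m r + (1 + r)) / 2) / 2) = (\<lambda>r. (m r + 1) / 2)"
    by (auto simp: fun_eq_iff field_simps)
  ultimately show "((\<lambda>r. (((1 - r) + m r) / 2 + (m r + (1 + r)) / 2) / 2) \<longlongrightarrow> 1) (at_right 0)"
    by simp
  have "\<forall>\<^sub>F r in at_right 0. 1 = ((m r + (1 + r)) / 2 - ((1 - r) + m r) / 2) / r"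
    using eventually_at_right_0_lt_1 by eventually_elim (simp add: field_simps)
  then show "((\<lambda>r. ((m r + (1 + r)) / 2 - ((1 - r) + m r) / 2) / r) \<longlongrightarrow> 1) (at_right 0)"
    by (rule Lim_transform_eventually[OF tendsto_const])
qed

lemma regular_pair_spread_diff:
  assumes PQ: "regular_pair P Q" and P'Q': "regular_pair P' Q'"
    and dP: "(\<lambda>r. P' r - P r) \<in> O[at_right 0](g)" and dQ: "(\<lambda>r. Q' r - Q r) \<in> O[at_right 0](g)"
  shows "(\<lambda>r. (Q r - P r) / (Q r + P r) - (Q' r - P' r) / (Q' r + P' r)) \<in> O[at_right 0](g)"
proof -
  define D where "D r = (Q r + P r) * (Q' r + P' r)" for r
  note lim = regular_pair_tendsto_1[OF PQ] regular_pair_tendsto_1[OF P'Q']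
  have "((\<lambda>r. 2 * Q r / D r) \<longlongrightarrow> 2 * 1 / ((1 + 1) * (1 + 1))) (at_right 0)"
       "((\<lambda>r. 2 * P r / D r) \<longlongrightarrow> 2 * 1 / ((1 + 1) * (1 + 1))) (at_right 0)"
    unfolding D_def by (intro tendsto_intros lim; simp)+
  then have "(\<lambda>r. (P' r - P r) * (2 * Q r / D r) - (Q' r - Q r) * (2 * P r / D r)) \<in> O[at_right 0](g)"
    by (intro sum_in_bigo landau_o.big_1_mult[OF dP] landau_o.big_1_mult[OF dQ] bigo_1_of_tendsto)
  moreover have "\<forall>\<^sub>F r in at_right 0.
      (P' r - P r) * (2 * Q r / D r) - (Q' r - Q r) * (2 * P r / D r)
      = (Q r - P r) / (Q r + P r) - (Q' r - P' r) / (Q' r + P' r)"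
    using regular_pair_eventually_pos[OF PQ] regular_pair_eventually_pos[OF P'Q']
  proof eventually_elim
    case (elim r)
    then have "Q r + P r \<noteq> 0" "Q' r + P' r \<noteq> 0" by auto
    then show ?case unfolding D_def by (simp add: divide_simps) algebra
  qed
  ultimately show ?thesis by (rule landau_o.big.in_cong[THEN iffD1, rotated])
qed

lemma regular_pair_spread_power:
  assumes "regular_pair P Q"
  shows "(\<lambda>r. (P r + Q r) / 2 * ((Q r - P r) / (Q r + P r)) ^ k - r ^ k / 2 ^ k)
    \<in> o[at_right 0](\<lambda>r. r ^ k)"
proof (rule smalloI_tendsto)
  have "((\<lambda>r. (P r + Q r) / 2) \<longlongrightarrow> 1) (at_right 0)"
    using assms unfolding regular_pair_def by blast
  from tendsto_diff[OF tendsto_mult[OF this tendsto_power[OF regular_pair_spread[OF assms], of k]]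
      tendsto_const[of "1 / 2 ^ k"]]
  have "((\<lambda>r. (P r + Q r) / 2 * ((Q r - P r) / (Q r + P r) / r) ^ k - 1 / 2 ^ k) \<longlongrightarrow> 0)
      (at_right 0)"
    by (simp add: power_divide)
  moreover have "\<forall>\<^sub>F r in at_right 0.
      (P r + Q r) / 2 * ((Q r - P r) / (Q r + P r) / r) ^ k - 1 / 2 ^ k
      = ((P r + Q r) / 2 * ((Q r - P r) / (Q r + P r)) ^ k - r ^ k / 2 ^ k) / r ^ k"
    using eventually_at_right_0_lt_1
  proof eventually_elim
    case (elim r)
    have "c * (x / r) ^ k - 1 / 2 ^ k = (c * x ^ k - r ^ k / 2 ^ k) / r ^ k" for c x :: real
      using elim by (simp add: power_divide field_simps)
    then show ?case .
  qed
  ultimately show "((\<lambda>r. ((P r + Q r) / 2 * ((Q r - P r) / (Q r + P r)) ^ k - r ^ k / 2 ^ k) / r ^ k)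
      \<longlongrightarrow> 0) (at_right 0)"
    by (rule Lim_transform_eventually)
  show "\<forall>\<^sub>F r in at_right 0. (r::real) ^ k \<noteq> 0"
    using eventually_at_right_0_lt_1 by eventually_elim simp
qed

section \<open>Perturbing the stabilization\<close>

lemma mean_form_diagonal: "mean_form \<phi> (1 - r) (1 + r) = \<phi> r"
  by (simp add: mean_form_def)

lemma stab_form_mean_form:
  "stab_form (mean_form \<phi>A) (mean_form \<phi>B) (mean_form \<phi>C) r =
    mean_form \<phi>A (mean_form \<phi>C (1 - r) (\<phi>B r)) (mean_form \<phi>C (\<phi>B r) (1 + r))"
  by (simp add: stab_form_def mean_form_diagonal)

lemma mean_form_first_order:
  assumes "(\<lambda>v. \<phi> v - 1) \<in> o[at_right 0](\<lambda>v. v)" "regular_pair P Q"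
  shows "(\<lambda>r. mean_form \<phi> (P r) (Q r) - (P r + Q r) / 2) \<in> o[at_right 0](\<lambda>r. r)"
proof -
  have "(\<lambda>r. \<phi> ((Q r - P r) / (Q r + P r)) - 1) \<in> o[at_right 0](\<lambda>r. r)"
    using landau_o.small_big_trans[OF landau_o.small.compose[OF assms(1)
        regular_pair_spread_filterlim[OF assms(2)]] regular_pair_spread_bigo[OF assms(2)]] .
  moreover have "(\<lambda>r. (P r + Q r) / 2) \<in> O[at_right 0](\<lambda>_. 1)"
    using assms(2) unfolding regular_pair_def by (blast intro: bigo_1_of_tendsto)
  ultimately show ?thesis
    using landau_o.small_1_mult' unfolding mean_form_def by (fastforce simp: algebra_simps)
qed

lemma regular_pair_inner_mean_forms:
  assumes "n \<ge> 1" "profile_expansion \<phi>B \<alpha>B n" "profile_expansion \<phi>C \<alpha>C n"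
  shows "regular_pair (\<lambda>r. mean_form \<phi>C (1 - r) (\<phi>B r)) (\<lambda>r. mean_form \<phi>C (\<phi>B r) (1 + r))"
proof (rule regular_pair_perturb[OF
      regular_pair_midpoints[OF profile_expansion_tendsto_1[OF assms(2,1)]]])
  note inner = regular_pair_inner[OF profile_expansion_smallo_id[OF assms(2,1)]]
  note first_order = mean_form_first_order[OF profile_expansion_smallo_id[OF assms(3,1)]]
  show "(\<lambda>r. mean_form \<phi>C (1 - r) (\<phi>B r) - ((1 - r) + \<phi>B r) / 2) \<in> o[at_right 0](\<lambda>r. r)"
    by (rule first_order[OF inner(1)])
  show "(\<lambda>r. mean_form \<phi>C (\<phi>B r) (1 + r) - (\<phi>B r + (1 + r)) / 2) \<in> o[at_right 0](\<lambda>r. r)"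
    by (rule first_order[OF inner(2)])
qed

text \<open>With \<open>c = (P + Q)/2\<close> and \<open>w\<close> the relative spread, the difference splits into
  \<open>c (\<phi> w - \<phi>' w - \<delta> w^2n) + \<delta> (c w^2n - r^2n / 4^n) + c (\<phi>' w - \<phi>' w') + (\<phi>' w' - 1) (c - c')\<close>;
  apart from \<open>\<delta> r^2n / 4^n\<close> only the change of \<open>c\<close> survives at order \<open>r^2n\<close>.\<close>
lemma mean_form_perturb:
  fixes \<phi> \<phi>' P Q P' Q' :: "real \<Rightarrow> real"
  assumes n: "n \<ge> 1" and ex: "profile_expansion \<phi>' \<alpha> n"
    and dif: "(\<lambda>v. \<phi> v - \<phi>' v - \<delta> * v ^ (2 * n)) \<in> o[at_right 0](\<lambda>v. v ^ (2 * n))"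
    and PQ: "regular_pair P Q"
    and dP: "(\<lambda>r. P' r - P r) \<in> O[at_right 0](\<lambda>r. r ^ (2 * n))"
    and dQ: "(\<lambda>r. Q' r - Q r) \<in> O[at_right 0](\<lambda>r. r ^ (2 * n))"
  shows "(\<lambda>r. mean_form \<phi> (P r) (Q r) - mean_form \<phi>' (P' r) (Q' r)
      - (\<delta> * r ^ (2 * n) / 4 ^ n + ((P r - P' r) + (Q r - Q' r)) / 2))
      \<in> o[at_right 0](\<lambda>r. r ^ (2 * n))"
proof -
  define c where "c r = (P r + Q r) / 2" for r
  define c' where "c' r = (P' r + Q' r) / 2" for r
  define w where "w r = (Q r - P r) / (Q r + P r)" for r
  define w' where "w' r = (Q' r - P' r) / (Q' r + P' r)" for r
  have P'Q': "regular_pair P' Q'"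
    using regular_pair_perturb[OF PQ] landau_o.big_small_trans[OF dP power_even_smallo_id[OF n]]
      landau_o.big_small_trans[OF dQ power_even_smallo_id[OF n]] by blast
  have fw: "filterlim w (at_right 0) (at_right 0)" "filterlim w' (at_right 0) (at_right 0)"
    unfolding w_def w'_def
    by (rule regular_pair_spread_filterlim[OF PQ] regular_pair_spread_filterlim[OF P'Q'])+
  have Ow: "w \<in> O[at_right 0](\<lambda>r. r)" "w' \<in> O[at_right 0](\<lambda>r. r)"
    unfolding w_def w'_def
    by (rule regular_pair_spread_bigo[OF PQ] regular_pair_spread_bigo[OF P'Q'])+
  have cb: "c \<in> O[at_right 0](\<lambda>_. 1)"
    using PQ unfolding regular_pair_def c_def by (blast intro: bigo_1_of_tendsto)
  have dw: "(\<lambda>r. w r - w' r) \<in> O[at_right 0](\<lambda>r. r ^ (2 * n))"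
    unfolding w_def w'_def by (rule regular_pair_spread_diff[OF PQ P'Q' dP dQ])
  have t1: "(\<lambda>r. c r * (\<phi> (w r) - \<phi>' (w r) - \<delta> * w r ^ (2 * n))) \<in> o[at_right 0](\<lambda>r. r ^ (2 * n))"
    using landau_o.small_1_mult'[OF cb landau_o.small_big_trans[OF
          landau_o.small.compose[OF dif fw(1)] landau_o.big_power[OF Ow(1)]]]
    by (simp add: mult.commute)
  have t2: "(\<lambda>r. \<delta> * (c r * w r ^ (2 * n) - r ^ (2 * n) / 4 ^ n)) \<in> o[at_right 0](\<lambda>r. r ^ (2 * n))"
    using regular_pair_spread_power[OF PQ, of "2 * n"] unfolding c_def w_def
    by (simp add: power_mult)
  have t3: "(\<lambda>r. c r * (\<phi>' (w r) - \<phi>' (w' r))) \<in> o[at_right 0](\<lambda>r. r ^ (2 * n))"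
    using landau_o.small_1_mult'[OF cb profile_expansion_compose_diff[OF ex fw Ow dw]]
    by (simp add: mult.commute)
  have t4: "(\<lambda>r. (\<phi>' (w' r) - 1) * (c r - c' r)) \<in> o[at_right 0](\<lambda>r. r ^ (2 * n))"
  proof (rule tendsto_0_mult_bigo_smallo)
    have "((\<lambda>r. \<phi>' (w' r)) \<longlongrightarrow> 1) (at_right 0)"
      using filterlim_compose[OF profile_expansion_tendsto_1[OF ex n] fw(2)] .
    then show "((\<lambda>r. \<phi>' (w' r) - 1) \<longlongrightarrow> 0) (at_right 0)"
      using tendsto_diff[of _ 1 _ "\<lambda>_. 1" 1] by force
    have "(\<lambda>r. c r - c' r) = (\<lambda>r. ((P' r - P r) + (Q' r - Q r)) * (- 1 / 2))"
      unfolding c_def c'_def by (auto simp: fun_eq_iff field_simps)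
    then show "(\<lambda>r. c r - c' r) \<in> O[at_right 0](\<lambda>r. r ^ (2 * n))"
      using sum_in_bigo(1)[OF dP dQ] by simp
  qed
  have "(\<lambda>r. c r * (\<phi> (w r) - \<phi>' (w r) - \<delta> * w r ^ (2 * n))
      + \<delta> * (c r * w r ^ (2 * n) - r ^ (2 * n) / 4 ^ n)
      + c r * (\<phi>' (w r) - \<phi>' (w' r)) + (\<phi>' (w' r) - 1) * (c r - c' r))
      \<in> o[at_right 0](\<lambda>r. r ^ (2 * n))"
    by (intro sum_in_smallo t1 t2 t3 t4)
  then show ?thesis
    unfolding mean_form_def c_def c'_def w_def[symmetric] w'_def[symmetric]
    by (simp add: algebra_simps diff_divide_distrib add_divide_distrib)
qed

text \<open>Each inner mean moves by \<open>\<delta>C r^2n / 4^n + (\<phi>B - \<phi>B') / 2\<close>; the outer mean adds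
  \<open>\<delta>A r^2n / 4^n\<close> and the average of the inner changes.\<close>
lemma stab_form_perturb:
  fixes \<phi>A \<phi>A' \<phi>B \<phi>B' \<phi>C \<phi>C' :: "real \<Rightarrow> real"
  assumes n: "n \<ge> 1"
    and exA': "profile_expansion \<phi>A' \<alpha>A' n" and exB: "profile_expansion \<phi>B \<alpha>B n"
    and exC: "profile_expansion \<phi>C \<alpha>C n" and exC': "profile_expansion \<phi>C' \<alpha>C' n"
    and dA: "(\<lambda>v. \<phi>A v - \<phi>A' v - \<delta>A * v ^ (2 * n)) \<in> o[at_right 0](\<lambda>v. v ^ (2 * n))"
    and dB: "(\<lambda>v. \<phi>B v - \<phi>B' v - \<delta>B * v ^ (2 * n)) \<in> o[at_right 0](\<lambda>v. v ^ (2 * n))"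
    and dC: "(\<lambda>v. \<phi>C v - \<phi>C' v - \<delta>C * v ^ (2 * n)) \<in> o[at_right 0](\<lambda>v. v ^ (2 * n))"
  shows "(\<lambda>r. stab_form (mean_form \<phi>A) (mean_form \<phi>B) (mean_form \<phi>C) r
      - stab_form (mean_form \<phi>A') (mean_form \<phi>B') (mean_form \<phi>C') r
      - (\<delta>A / 4 ^ n + \<delta>B / 2 + \<delta>C / 4 ^ n) * r ^ (2 * n)) \<in> o[at_right 0](\<lambda>r. r ^ (2 * n))"
proof -
  define P where "P r = mean_form \<phi>C (1 - r) (\<phi>B r)" for r
  define Q where "Q r = mean_form \<phi>C (\<phi>B r) (1 + r)" for r
  define P' where "P' r = mean_form \<phi>C' (1 - r) (\<phi>B' r)" for r
  define Q' where "Q' r = mean_form \<phi>C' (\<phi>B' r) (1 + r)" for r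
  define e where "e r = \<delta>C * r ^ (2 * n) / 4 ^ n + (\<phi>B r - \<phi>B' r) / 2" for r
  have hB: "(\<lambda>r. \<phi>B r - \<phi>B' r) \<in> O[at_right 0](\<lambda>r. r ^ (2 * n))"
    by (rule bigo_of_smallo_diff_monomial[OF dB])
  have he: "e \<in> O[at_right 0](\<lambda>r. r ^ (2 * n))"
    unfolding e_def using hB by (intro sum_in_bigo) (auto simp: field_simps)
  have const: "(\<lambda>r. (1 - r) - (1 - r)) \<in> O[at_right 0](\<lambda>r. r ^ (2 * n))"
      "(\<lambda>r. (1 + r) - (1 + r)) \<in> O[at_right 0](\<lambda>r. r ^ (2 * n))"
    by simp_all
  have inner: "regular_pair (\<lambda>r. 1 - r) \<phi>B" "regular_pair \<phi>B (\<lambda>r. 1 + r)"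
    by (rule regular_pair_inner[OF profile_expansion_smallo_id[OF exB n]])+
  have EP: "(\<lambda>r. P r - P' r - e r) \<in> o[at_right 0](\<lambda>r. r ^ (2 * n))"
    using mean_form_perturb[OF n exC' dC inner(1) const(1) bigo_diff_commute[OF hB]]
    unfolding P_def P'_def e_def by simp
  have EQ: "(\<lambda>r. Q r - Q' r - e r) \<in> o[at_right 0](\<lambda>r. r ^ (2 * n))"
    using mean_form_perturb[OF n exC' dC inner(2) bigo_diff_commute[OF hB] const(2)]
    unfolding Q_def Q'_def e_def by simp
  have outer: "regular_pair P Q"
    unfolding P_def[abs_def] Q_def[abs_def] by (rule regular_pair_inner_mean_forms[OF n exB exC])
  have hP: "(\<lambda>r. P' r - P r) \<in> O[at_right 0](\<lambda>r. r ^ (2 * n))"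
    by (rule bigo_diff_commute) (use sum_in_bigo(1)[OF landau_o.small_imp_big[OF EP] he] in simp)
  have hQ: "(\<lambda>r. Q' r - Q r) \<in> O[at_right 0](\<lambda>r. r ^ (2 * n))"
    by (rule bigo_diff_commute) (use sum_in_bigo(1)[OF landau_o.small_imp_big[OF EQ] he] in simp)
  have combined: "(\<lambda>r. (mean_form \<phi>A (P r) (Q r) - mean_form \<phi>A' (P' r) (Q' r)
        - (\<delta>A * r ^ (2 * n) / 4 ^ n + ((P r - P' r) + (Q r - Q' r)) / 2))
      + ((P r - P' r - e r) + (Q r - Q' r - e r)) / 2
      + (\<phi>B r - \<phi>B' r - \<delta>B * r ^ (2 * n)) / 2) \<in> o[at_right 0](\<lambda>r. r ^ (2 * n))"
    using sum_in_smallo(1)[OF sum_in_smallo(1)[OF mean_form_perturb[OF n exA' dA outer hP hQ]]]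
      sum_in_smallo(1)[OF EP EQ] dB by simp
  have eq: "(mean_form \<phi>A (P r) (Q r) - mean_form \<phi>A' (P' r) (Q' r)
        - (\<delta>A * r ^ (2 * n) / 4 ^ n + ((P r - P' r) + (Q r - Q' r)) / 2))
      + ((P r - P' r - e r) + (Q r - Q' r - e r)) / 2
      + (\<phi>B r - \<phi>B' r - \<delta>B * r ^ (2 * n)) / 2
      = mean_form \<phi>A (P r) (Q r) - mean_form \<phi>A' (P' r) (Q' r)
        - (\<delta>A / 4 ^ n + \<delta>B / 2 + \<delta>C / 4 ^ n) * r ^ (2 * n)" for r
    by (simp add: e_def field_simps)
  show ?thesis
    using combined unfolding eq stab_form_mean_form P_def[symmetric] Q_def[symmetric]
      P'_def[symmetric] Q'_def[symmetric] .
qed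

section \<open>Coefficients of stabilizable profiles\<close>

lemma profile_coeffs_eq_of_double_stabilization:
  assumes exK: "\<And>n. profile_expansion \<phi>K \<alpha>K n" and exM: "\<And>n. profile_expansion \<phi>M \<alpha>M n"
    and exN: "\<And>n. profile_expansion \<phi>N \<alpha>N n"
    and KMN: "\<forall>\<^sub>F r in at_right 0. \<phi>N r = stab_form (mean_form \<phi>K) (mean_form \<phi>M) (mean_form \<phi>N) r"
    and MKN: "\<forall>\<^sub>F r in at_right 0. \<phi>N r = stab_form (mean_form \<phi>M) (mean_form \<phi>K) (mean_form \<phi>N) r"
  shows "\<alpha>K n = \<alpha>M n"
proof (induction n rule: less_induct)
  case (less n)
  show ?case
  proof (cases "n = 0")
    case True
    then show ?thesis using exK exM by (simp add: profile_expansion_def)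
  next
    case False
    then have n: "n \<ge> 1" by simp
    define \<delta> where "\<delta> = \<alpha>K n - \<alpha>M n"
    have dKM: "(\<lambda>v. \<phi>K v - \<phi>M v - \<delta> * v ^ (2 * n)) \<in> o[at_right 0](\<lambda>v. v ^ (2 * n))"
      unfolding \<delta>_def using profile_expansion_diff[OF exK exM] less by blast
    have dMK: "(\<lambda>v. \<phi>M v - \<phi>K v - (- \<delta>) * v ^ (2 * n)) \<in> o[at_right 0](\<lambda>v. v ^ (2 * n))"
      using landau_o.small.uminus_in_iff[THEN iffD2, OF dKM] by (simp add: algebra_simps)
    have dNN: "(\<lambda>v. \<phi>N v - \<phi>N v - 0 * v ^ (2 * n)) \<in> o[at_right 0](\<lambda>v. v ^ (2 * n))"
      by simp
    have "\<forall>\<^sub>F r in at_right 0. stab_form (mean_form \<phi>K) (mean_form \<phi>M) (mean_form \<phi>N) r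
        = stab_form (mean_form \<phi>M) (mean_form \<phi>K) (mean_form \<phi>N) r"
      using KMN MKN by eventually_elim simp
    from coeff_eq_0_of_eventually_eq[OF this stab_form_perturb[OF n exM exM exN exN dKM dMK dNN]]
    have "\<delta> * (1 / 4 ^ n - 1 / 2) = 0" by (simp add: algebra_simps)
    moreover have "(4::real) ^ n \<ge> 4 ^ 1" using n by (intro power_increasing) auto
    then have "1 / 4 ^ n < (1 / 2 :: real)" by (simp add: field_simps)
    ultimately show ?thesis unfolding \<delta>_def by auto
  qed
qed

lemma profile_coeffs_eq_of_stabilization:
  assumes exK: "\<And>n. profile_expansion \<phi>K \<alpha>K n" and exM: "\<And>n. profile_expansion \<phi>M \<alpha>M n"
    and exN: "\<And>n. profile_expansion \<phi>N \<alpha>N n" and KM: "\<And>n. \<alpha>K n = \<alpha>M n"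
    and KMN: "\<forall>\<^sub>F r in at_right 0. \<phi>N r = stab_form (mean_form \<phi>K) (mean_form \<phi>M) (mean_form \<phi>N) r"
    and MMM: "\<forall>\<^sub>F r in at_right 0. \<phi>M r = stab_form (mean_form \<phi>M) (mean_form \<phi>M) (mean_form \<phi>M) r"
  shows "\<alpha>N n = \<alpha>M n"
proof (induction n rule: less_induct)
  case (less n)
  show ?case
  proof (cases "n = 0")
    case True
    then show ?thesis using exN exM by (simp add: profile_expansion_def)
  next
    case False
    then have n: "n \<ge> 1" by simp
    define \<delta> where "\<delta> = \<alpha>N n - \<alpha>M n"
    have dNM: "(\<lambda>v. \<phi>N v - \<phi>M v - \<delta> * v ^ (2 * n)) \<in> o[at_right 0](\<lambda>v. v ^ (2 * n))"
      unfolding \<delta>_def using profile_expansion_diff[OF exN exM] less by blast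
    have dKM: "(\<lambda>v. \<phi>K v - \<phi>M v - 0 * v ^ (2 * n)) \<in> o[at_right 0](\<lambda>v. v ^ (2 * n))"
      using profile_expansion_diff[OF exK exM, of n] KM by simp
    have dMM: "(\<lambda>v. \<phi>M v - \<phi>M v - 0 * v ^ (2 * n)) \<in> o[at_right 0](\<lambda>v. v ^ (2 * n))"
      by simp
    have "(\<lambda>r. (stab_form (mean_form \<phi>K) (mean_form \<phi>M) (mean_form \<phi>N) r
          - stab_form (mean_form \<phi>M) (mean_form \<phi>M) (mean_form \<phi>M) r
          - (0 / 4 ^ n + 0 / 2 + \<delta> / 4 ^ n) * r ^ (2 * n))
        - (\<phi>N r - \<phi>M r - \<delta> * r ^ (2 * n))) \<in> o[at_right 0](\<lambda>r. r ^ (2 * n))"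
      by (intro sum_in_smallo stab_form_perturb[OF n exM exM exN exM dKM dMM dNM] dNM)
    moreover have "\<forall>\<^sub>F r in at_right 0. (stab_form (mean_form \<phi>K) (mean_form \<phi>M) (mean_form \<phi>N) r
          - stab_form (mean_form \<phi>M) (mean_form \<phi>M) (mean_form \<phi>M) r
          - (0 / 4 ^ n + 0 / 2 + \<delta> / 4 ^ n) * r ^ (2 * n))
        - (\<phi>N r - \<phi>M r - \<delta> * r ^ (2 * n)) = (\<delta> - \<delta> / 4 ^ n) * r ^ (2 * n)"
      using KMN MMM by eventually_elim (simp add: algebra_simps)
    ultimately have "(\<lambda>r. (\<delta> - \<delta> / 4 ^ n) * r ^ (2 * n)) \<in> o[at_right 0](\<lambda>r. r ^ (2 * n))"
      by (rule landau_o.small.in_cong[THEN iffD1, rotated])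
    then have "\<delta> - \<delta> / 4 ^ n = 0" by (rule coeff_eq_0_of_smallo[OF _ frequently_power_ne_0])
    then have "\<delta> * (1 - 1 / 4 ^ n) = 0" by (simp add: right_diff_distrib)
    moreover have "1 / 4 ^ n < (1::real)" using n by simp
    ultimately show ?thesis unfolding \<delta>_def by auto
  qed
qed

section \<open>The second coefficient of a stable profile\<close>

definition quartic :: "real \<Rightarrow> real \<Rightarrow> real \<Rightarrow> real" where
  "quartic a b v = 1 + a * v ^ 2 + b * v ^ 4"

definition quartic_numerator :: "real \<Rightarrow> real \<Rightarrow> real \<Rightarrow> real \<Rightarrow> real" where
  "quartic_numerator a b p q = (p + q) ^ 4 + a * (q - p) ^ 2 * (p + q) ^ 2 + b * (q - p) ^ 4"

lemma mean_form_quartic: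
  assumes "p + q \<noteq> 0"
  shows "mean_form (quartic a b) p q = quartic_numerator a b p q / (2 * (p + q) ^ 3)"
proof -
  have qp: "q + p = p + q" by (rule add.commute)
  show ?thesis
    unfolding mean_form_def quartic_def quartic_numerator_def qp
    using assms by (simp add: field_simps; algebra)
qed

lemma mean_form_quartic_swap: "mean_form (quartic a b) p q = mean_form (quartic a b) q p"
proof -
  have "(p - q) / (p + q) = - ((q - p) / (q + p))" by (simp add: add.commute minus_divide_left)
  then show ?thesis unfolding mean_form_def quartic_def by (simp add: add.commute)
qed

lemma profile_expansion_quartic: "\<alpha> 0 = 1 \<Longrightarrow> profile_expansion (quartic (\<alpha> 1) (\<alpha> 2)) \<alpha> 2"
  unfolding profile_expansion_def quartic_def by (simp add: eval_nat_numeral atMost_Suc)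

text \<open>Degree-four Taylor polynomials of the inner and outer mean forms of a quartic profile. The
  remainder polynomials were found by computer algebra; they certify the \<open>O(r^5)\<close> error terms.\<close>
definition quartic_inner :: "real \<Rightarrow> real \<Rightarrow> real \<Rightarrow> real" where
  "quartic_inner a b r = 1 - r / 2 + 3/4 * a * r ^ 2 + (1/8 * a + 1/2 * a ^ 2) * r ^ 3
    + (9/16 * b + 1/16 * a + 1/8 * a ^ 2 + 1/4 * a ^ 3) * r ^ 4"

definition stab_quartic_coeff :: "real \<Rightarrow> real \<Rightarrow> real" where
  "stab_quartic_coeff a b = 5/8 * b + 1/16 * a - 3/16 * a ^ 2 - 1/4 * a ^ 3"

definition inner_remainder :: "real \<Rightarrow> real \<Rightarrow> real \<Rightarrow> real" where
  "inner_remainder a b r =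
    (3/2 * b + 1/2 * a + 12 * a * b - 2 * a^3)
    + r * (- 3/4 * b - 1/2 * a - 23/2 * a * b - 1/2 * a^2 + 14 * a^2 * b + a^3 - 2 * a^4)
    + r^2 * (1/8 * b + 4 * b^2 + 1/8 * a + 9/2 * a * b + a^2 - 4 * a^2 * b + 1/2 * a^3
        + 4 * a^3 * b)
    + r^3 * (- 3/2 * b^2 - 3/8 * a * b + 16 * a * b^2 - 3/8 * a^2 - 7/4 * a^2 * b - 3/4 * a^3
        + 6 * a^3 * b - 1/2 * a^4 + a^4 * b - 2 * a^5)
    + r^4 * (3/2 * b^2 + 3/4 * a * b + 4 * a * b^2 + 3/8 * a^2 * b + 12 * a^2 * b^2 + 3/8 * a^3
        - 6 * a^3 * b + 1/2 * a^4 + 1/2 * a^5)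
    + r^5 * (- 3/8 * b^2 + 6 * b^3 - 3/8 * a * b - 13/2 * a * b^2 - 3/4 * a^2 * b
        + 12 * a^2 * b^2 - 1/8 * a^3 * b + 4 * a^3 * b^2 - 1/8 * a^4 - 2 * a^4 * b - 1/4 * a^5
        - 1/2 * a^6)
    + r^6 * (3/4 * a * b^2 + 12 * a * b^3 + 3/4 * a^2 * b - 6 * a^2 * b^2 + 3/4 * a^3 * b)
    + r^7 * (- 3/4 * b^3 + 4 * a * b^3 - 3/8 * a^2 * b^2 + 6 * a^2 * b^3 - 3/8 * a^3 * b
        + 3 * a^3 * b^2 - 3/4 * a^4 * b - 3/2 * a^5 * b)
    + r^8 * (3/8 * b^3 + 4 * b^4 + 3/8 * a * b^2 - 3/2 * a^3 * b^2)
    + r^9 * (- 7/8 * a * b^3 + 4 * a * b^4 - 3/8 * a^2 * b^2 + 4 * a^2 * b^3 - 3/4 * a^3 * b^2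
        - 3/2 * a^4 * b^2)
    + r^10 * (- 1/4 * a * b^3 - a^2 * b^3)
    + r^11 * (- 1/8 * b^4 + b^5 - 1/8 * a * b^3 + a * b^4 - 1/4 * a^2 * b^3 - 1/2 * a^3 * b^3)"

definition outer_remainder :: "real \<Rightarrow> real \<Rightarrow> real \<Rightarrow> real" where
  "outer_remainder a b r =
    r * (- 11/2 * a * b - 1/4 * a^2 - 4 * a^2 * b + 7/2 * a^3 + 7 * a^4 + 4 * a^5)
    + r^3 * (- 27/16 * b^2 - 3/16 * a * b - 9/4 * a^2 * b - 1/16 * a^3 + 27/4 * a^3 * b
        + 51/8 * a^4 + 6 * a^4 * b + 51/4 * a^5 + 8 * a^6)
    + r^5 * (- 81/16 * a * b^2 - 27/32 * a^2 * b - 1/32 * a^3 + 169/32 * a^3 * b + 45/64 * a^4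
        + 93/8 * a^4 * b + 169/32 * a^5 + 3/2 * a^5 * b + 181/16 * a^6 - 4 * a^6 * b
        + 39/4 * a^7 + 2 * a^8)
    + r^7 * (- 243/256 * b^3 - 27/128 * a * b^2 - 3/256 * a^2 * b - 27/256 * a^2 * b^2
        + 33/256 * a^3 * b + 135/32 * a^3 * b^2 + 1/64 * a^4 + 403/64 * a^4 * b + 173/256 * a^5
        + 775/64 * a^5 * b + 329/128 * a^6 + 129/16 * a^6 * b + 361/64 * a^7 + a^7 * b
        + 49/8 * a^8 + a^8 * b + 5/2 * a^9)
    + r^9 * (- 729/512 * a * b^3 - 405/1024 * a^2 * b^2 - 9/256 * a^3 * b + 729/256 * a^3 * b^2
        - 1/1024 * a^4 + 171/256 * a^4 * b + 1215/256 * a^4 * b^2 + 5/128 * a^5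
        + 333/128 * a^5 * b + 81/64 * a^5 * b^2 + 15/64 * a^6 + 369/64 * a^6 * b + 13/16 * a^7
        + 45/8 * a^7 * b + 13/8 * a^8 + 9/8 * a^8 * b + 33/16 * a^9 + 23/16 * a^10 + 1/4 * a^11)
    + r^11 * (- 729/4096 * b^4 - 243/4096 * a * b^3 - 27/4096 * a^2 * b^2
        + 3159/4096 * a^2 * b^3 - 1/4096 * a^3 * b + 1107/4096 * a^3 * b^2
        + 1215/1024 * a^3 * b^3 + 129/4096 * a^4 * b + 2025/2048 * a^4 * b^2 + 5/4096 * a^5
        + 183/1024 * a^5 * b + 2079/1024 * a^5 * b^2 + 19/2048 * a^6 + 607/1024 * a^6 * b
        + 459/256 * a^6 * b^2 + 21/512 * a^7 + 291/256 * a^7 * b + 59/512 * a^8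
        + 345/256 * a^8 * b + 29/128 * a^9 + 53/64 * a^9 * b + 39/128 * a^10 + 17/64 * a^11
        + 1/8 * a^12)"

lemma inner_remainder_identity:
  "quartic_numerator a b (1 - r) (quartic a b r)
    - 2 * ((1 - r) + quartic a b r) ^ 3 * quartic_inner a b r = r ^ 5 * inner_remainder a b r"
  unfolding quartic_numerator_def quartic_def quartic_inner_def inner_remainder_def by algebra

lemma outer_remainder_identity:
  "quartic_numerator a b (quartic_inner a b r) (quartic_inner a b (- r))
    - 2 * (quartic_inner a b r + quartic_inner a b (- r)) ^ 3 * quartic a (stab_quartic_coeff a b) r
    = r ^ 5 * outer_remainder a b r"
  unfolding quartic_numerator_def quartic_def quartic_inner_def stab_quartic_coeff_def
    outer_remainder_def by algebra

lemma mean_form_quartic_bigo: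
  fixes p q t R :: "real \<Rightarrow> real"
  assumes pq: "((\<lambda>r. p r + q r) \<longlongrightarrow> 2) F" and R: "(R \<longlongrightarrow> c) F"
    and identity: "\<And>r. quartic_numerator a b (p r) (q r) - 2 * (p r + q r) ^ 3 * t r = r ^ 5 * R r"
  shows "(\<lambda>r. mean_form (quartic a b) (p r) (q r) - t r) \<in> O[F](\<lambda>r. r ^ 5)"
proof -
  have pos: "\<forall>\<^sub>F r in F. p r + q r > 0" using order_tendstoD(1)[OF pq, of 0] by simp
  have "((\<lambda>r. R r / (2 * (p r + q r) ^ 3)) \<longlongrightarrow> c / (2 * 2 ^ 3)) F"
    by (intro tendsto_intros R pq) simp
  then have "(\<lambda>r. R r / (2 * (p r + q r) ^ 3)) \<in> O[F](\<lambda>_. 1)" by (rule bigo_1_of_tendsto)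
  from landau_o.big.mult_left[OF this, of "\<lambda>r. r ^ 5"]
  have "(\<lambda>r. r ^ 5 * (R r / (2 * (p r + q r) ^ 3))) \<in> O[F](\<lambda>r. r ^ 5)"
    by (simp only: mult_1_right)
  moreover have "\<forall>\<^sub>F r in F.
      r ^ 5 * (R r / (2 * (p r + q r) ^ 3)) = mean_form (quartic a b) (p r) (q r) - t r"
    using pos
  proof eventually_elim
    case (elim r)
    then have "mean_form (quartic a b) (p r) (q r) - t r
        = (quartic_numerator a b (p r) (q r) - 2 * (p r + q r) ^ 3 * t r) / (2 * (p r + q r) ^ 3)"
      by (simp add: mean_form_quartic field_simps)
    then show ?case by (simp add: identity)
  qed
  ultimately show ?thesis by (rule landau_o.big.in_cong[THEN iffD1, rotated])
qed

lemma tendsto_at_0_of_isCont: "isCont f 0 \<Longrightarrow> f 0 = L \<Longrightarrow> (f \<longlongrightarrow> L) (at 0)"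
  by (simp add: isCont_def)

lemma quartic_inner_bigo:
  "(\<lambda>r. mean_form (quartic a b) (1 - r) (quartic a b r) - quartic_inner a b r) \<in> O[at 0](\<lambda>r. r ^ 5)"
proof (rule mean_form_quartic_bigo[OF _ _ inner_remainder_identity])
  show "((\<lambda>r. (1 - r) + quartic a b r) \<longlongrightarrow> 2) (at 0)"
    by (rule tendsto_at_0_of_isCont) (simp_all add: quartic_def)
  show "(inner_remainder a b \<longlongrightarrow> inner_remainder a b 0) (at 0)"
    unfolding inner_remainder_def by (intro tendsto_at_0_of_isCont[OF _ refl] continuous_intros)
qed

lemma quartic_outer_bigo:
  "(\<lambda>r. mean_form (quartic a b) (quartic_inner a b r) (quartic_inner a b (- r))
      - quartic a (stab_quartic_coeff a b) r) \<in> O[at 0](\<lambda>r. r ^ 5)"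
proof (rule mean_form_quartic_bigo[OF _ _ outer_remainder_identity])
  show "((\<lambda>r. quartic_inner a b r + quartic_inner a b (- r)) \<longlongrightarrow> 2) (at 0)"
    by (rule tendsto_at_0_of_isCont) (simp_all add: quartic_inner_def)
  show "(outer_remainder a b \<longlongrightarrow> outer_remainder a b 0) (at 0)"
    unfolding outer_remainder_def by (intro tendsto_at_0_of_isCont[OF _ refl] continuous_intros)
qed

lemma regular_pair_quartic_inner: "regular_pair (quartic_inner a b) (\<lambda>r. quartic_inner a b (- r))"
  unfolding regular_pair_def
proof
  show "((\<lambda>r. (quartic_inner a b r + quartic_inner a b (- r)) / 2) \<longlongrightarrow> 1) (at_right 0)"
    using tendsto_at_0_of_isCont[of "\<lambda>r. (quartic_inner a b r + quartic_inner a b (- r)) / 2" 1]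
    by (auto simp: quartic_inner_def intro: tendsto_mono[OF at_le[OF subset_UNIV]])
  have "\<forall>\<^sub>F r in at_right 0.
      1 - (a / 4 + a ^ 2) * r ^ 2 = (quartic_inner a b (- r) - quartic_inner a b r) / r"
    using eventually_at_right_0_lt_1
    by eventually_elim (simp add: quartic_inner_def field_simps; algebra)
  moreover have "((\<lambda>r. 1 - (a / 4 + a ^ 2) * r ^ 2) \<longlongrightarrow> 1) (at_right (0::real))"
    using tendsto_at_0_of_isCont[of "\<lambda>r. 1 - (a / 4 + a ^ 2) * r ^ 2" 1]
    by (auto intro: tendsto_mono[OF at_le[OF subset_UNIV]])
  ultimately show "((\<lambda>r. (quartic_inner a b (- r) - quartic_inner a b r) / r) \<longlongrightarrow> 1) (at_right 0)"
    by (simp add: Lim_transform_eventually)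
qed

lemma power5_smallo_power4: "(\<lambda>r::real. r ^ 5) \<in> o[at_right 0](\<lambda>r. r ^ (2 * 2))"
proof (rule smalloI_tendsto)
  have "\<forall>\<^sub>F r in at_right 0. r = (r::real) ^ 5 / r ^ (2 * 2)"
    using eventually_at_right_0_lt_1 by eventually_elim (simp add: eval_nat_numeral)
  then show "((\<lambda>r::real. r ^ 5 / r ^ (2 * 2)) \<longlongrightarrow> 0) (at_right 0)"
    by (rule Lim_transform_eventually[OF tendsto_ident_at])
  show "\<forall>\<^sub>F r in at_right 0. (r::real) ^ (2 * 2) \<noteq> 0"
    using eventually_at_right_0_lt_1 by eventually_elim simp
qed

lemma bigo_at_0_power5_imp_smallo:
  "f \<in> O[at 0](\<lambda>r. r ^ 5) \<Longrightarrow> f \<in> o[at_right 0](\<lambda>r::real. r ^ (2 * 2))"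
  using landau_o.big_small_trans[OF landau_o.big.filter_mono[OF at_le[OF subset_UNIV]]
      power5_smallo_power4]
  by blast

text \<open>The quartic profile is even, so the second inner mean is the mirror image of the first and one
  two-sided inner expansion at \<open>0\<close> serves both.\<close>
lemma stab_form_quartic:
  "(\<lambda>r. stab_form (mean_form (quartic a b)) (mean_form (quartic a b)) (mean_form (quartic a b)) r
      - quartic a (stab_quartic_coeff a b) r) \<in> o[at_right 0](\<lambda>r. r ^ (2 * 2))"
proof -
  define \<psi> where "\<psi> = quartic a b"
  define p where "p = quartic_inner a b"
  define P where "P r = mean_form \<psi> (1 - r) (\<psi> r)" for r
  have mirror: "mean_form \<psi> (\<psi> r) (1 + r) = P (- r)" for r
    unfolding P_def \<psi>_def by (subst mean_form_quartic_swap) (simp add: quartic_def)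
  have hP0: "(\<lambda>r. P r - p r) \<in> O[at 0](\<lambda>r. r ^ 5)"
    unfolding P_def p_def \<psi>_def by (rule quartic_inner_bigo)
  have "filterlim (\<lambda>r::real. - r) (at 0) (at_right 0)"
    by (rule filterlim_atI)
      (use eventually_at_right_0_lt_1 in \<open>auto elim: eventually_mono intro!: tendsto_eq_intros\<close>)
  from landau_o.big.compose[OF hP0 this]
  have hQ: "(\<lambda>r. P (- r) - p (- r)) \<in> o[at_right 0](\<lambda>r. r ^ (2 * 2))"
    using landau_o.big_small_trans[OF _ power5_smallo_power4] by simp
  have hP: "(\<lambda>r. P r - p r) \<in> o[at_right 0](\<lambda>r. r ^ (2 * 2))"
    by (rule bigo_at_0_power5_imp_smallo[OF hP0])
  have pp: "regular_pair p (\<lambda>r. p (- r))"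
    unfolding p_def by (rule regular_pair_quartic_inner)
  have ex\<psi>: "profile_expansion \<psi> (\<lambda>l. if l = 0 then 1 else if l = 1 then a else b) 2"
    using profile_expansion_quartic[of "\<lambda>l. if l = 0 then 1 else if l = 1 then a else b"]
    unfolding \<psi>_def by simp
  have perturb: "(\<lambda>r. mean_form \<psi> (p r) (p (- r)) - mean_form \<psi> (P r) (P (- r))
      - (0 * r ^ (2 * 2) / 4 ^ 2 + ((p r - P r) + (p (- r) - P (- r))) / 2))
      \<in> o[at_right 0](\<lambda>r. r ^ (2 * 2))"
    by (rule mean_form_perturb[OF _ ex\<psi> _ pp]) (use hP hQ in \<open>simp_all add: landau_o.small_imp_big\<close>)
  have outer: "(\<lambda>r. mean_form \<psi> (p r) (p (- r)) - quartic a (stab_quartic_coeff a b) r)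
      \<in> o[at_right 0](\<lambda>r. r ^ (2 * 2))"
    unfolding \<psi>_def p_def by (rule bigo_at_0_power5_imp_smallo[OF quartic_outer_bigo])
  have "(\<lambda>r. ((P r - p r) + (P (- r) - p (- r))) / 2) \<in> o[at_right 0](\<lambda>r. r ^ (2 * 2))"
    using sum_in_smallo(1)[OF hP hQ] by simp
  from sum_in_smallo(1)[OF sum_in_smallo(2)[OF outer perturb] this]
  have "(\<lambda>r. mean_form \<psi> (P r) (P (- r)) - quartic a (stab_quartic_coeff a b) r)
      \<in> o[at_right 0](\<lambda>r. r ^ (2 * 2))"
    by (simp add: algebra_simps diff_divide_distrib add_divide_distrib)
  then show ?thesis
    unfolding stab_form_mean_form \<psi>_def[symmetric] P_def[symmetric] mirror .
qed

lemma stable_profile_coeff_2: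
  assumes ex: "profile_expansion \<phi> \<alpha> 2"
    and stable: "\<forall>\<^sub>F r in at_right 0. \<phi> r = stab_form (mean_form \<phi>) (mean_form \<phi>) (mean_form \<phi>) r"
  shows "\<alpha> 2 = 1/6 * \<alpha> 1 * (1 + \<alpha> 1) * (1 - 4 * \<alpha> 1)"
proof -
  define \<psi> where "\<psi> = quartic (\<alpha> 1) (\<alpha> 2)"
  define b' where "b' = stab_quartic_coeff (\<alpha> 1) (\<alpha> 2)"
  have ex\<psi>: "profile_expansion \<psi> \<alpha> 2"
    unfolding \<psi>_def using ex by (intro profile_expansion_quartic) (simp add: profile_expansion_def)
  have d: "(\<lambda>v. \<phi> v - \<psi> v - 0 * v ^ (2 * 2)) \<in> o[at_right 0](\<lambda>v. v ^ (2 * 2))"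
    using profile_expansion_diff[OF ex ex\<psi>] by simp
  have "(\<lambda>r. stab_form (mean_form \<phi>) (mean_form \<phi>) (mean_form \<phi>) r
      - stab_form (mean_form \<psi>) (mean_form \<psi>) (mean_form \<psi>) r
      - (0 / 4 ^ 2 + 0 / 2 + 0 / 4 ^ 2) * r ^ (2 * 2)) \<in> o[at_right 0](\<lambda>r. r ^ (2 * 2))"
    by (rule stab_form_perturb[OF _ ex\<psi> ex ex ex\<psi> d d d]) simp
  moreover have "\<forall>\<^sub>F r in at_right 0. stab_form (mean_form \<phi>) (mean_form \<phi>) (mean_form \<phi>) r
      - stab_form (mean_form \<psi>) (mean_form \<psi>) (mean_form \<psi>) r
      - (0 / 4 ^ 2 + 0 / 2 + 0 / 4 ^ 2) * r ^ (2 * 2)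
      = \<phi> r - stab_form (mean_form \<psi>) (mean_form \<psi>) (mean_form \<psi>) r"
    using stable by eventually_elim simp
  ultimately have "(\<lambda>r. \<phi> r - stab_form (mean_form \<psi>) (mean_form \<psi>) (mean_form \<psi>) r)
      \<in> o[at_right 0](\<lambda>r. r ^ (2 * 2))"
    by (rule landau_o.small.in_cong[THEN iffD1, rotated])
  then have "(\<lambda>r. (\<phi> r - stab_form (mean_form \<psi>) (mean_form \<psi>) (mean_form \<psi>) r)
      + (stab_form (mean_form \<psi>) (mean_form \<psi>) (mean_form \<psi>) r - quartic (\<alpha> 1) b' r)
      - (\<phi> r - \<psi> r - 0 * r ^ (2 * 2))) \<in> o[at_right 0](\<lambda>r. r ^ (2 * 2))"
    using sum_in_smallo(2)[OF sum_in_smallo(1)[OF _ stab_form_quartic[of "\<alpha> 1" "\<alpha> 2",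
          folded \<psi>_def b'_def]] d]
    by blast
  then have "(\<lambda>r. (\<alpha> 2 - b') * r ^ (2 * 2)) \<in> o[at_right 0](\<lambda>r. r ^ (2 * 2))"
    by (simp add: \<psi>_def quartic_def algebra_simps)
  then have "\<alpha> 2 = b'" using coeff_eq_0_of_smallo[OF _ frequently_power_ne_0] by fastforce
  then show ?thesis unfolding b'_def stab_quartic_coeff_def by (simp add: field_simps) algebra
qed

theorem mainTheorem9:
  fixes K M N :: "real \<Rightarrow> real \<Rightarrow> real" and aK aM aN :: "nat \<Rightarrow> real"
  assumes "is_mean K" "symmetric_mean K" "homogeneous_mean K" "stable_mean K"
      and "is_mean M" "symmetric_mean M" "homogeneous_mean M" "stable_mean M"
      and "is_mean N" "symmetric_mean N" "homogeneous_mean N"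
      and "sym_asymp_expansion K aK" "sym_asymp_expansion M aM" "sym_asymp_expansion N aN"
      and "stabilizable K M N" "stabilizable M K N"
  shows "(\<forall>n. aK n = aM n) \<and> aN 1 = aM 1 \<and> aM 1 = aK 1 \<and>
         aN 2 = 1/6 * aN 1 * (1 + aN 1) * (1 - 4 * aN 1)"
proof -
  note exK = profile_expansion_of_mean[OF assms(1,3,12)]
  note exM = profile_expansion_of_mean[OF assms(5,7,13)]
  note exN = profile_expansion_of_mean[OF assms(9,11,14)]
  note stab = profile_eq_stab_form[OF assms(1,3,5,7,9,11,15)]
    profile_eq_stab_form[OF assms(5,7,1,3,9,11,16)]
    profile_eq_stab_form[OF assms(5,7,5,7,5,7), folded stable_mean_iff_stabilizable, OF assms(8)]
  have KM: "aK n = aM n" for n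
    by (rule profile_coeffs_eq_of_double_stabilization[OF exK exM exN stab(1,2)])
  have NM: "aN n = aM n" for n
    by (rule profile_coeffs_eq_of_stabilization[OF exK exM exN KM stab(1,3)])
  have "aM 2 = 1/6 * aM 1 * (1 + aM 1) * (1 - 4 * aM 1)"
    by (rule stable_profile_coeff_2[OF exM stab(3)])
  then show ?thesis using KM NM by simp
qed

end
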